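(* Let $\mathcal A$ be a strongly regular bi-sequence of length $k$, let $\sigma,\omega\in S_k$ with $\sigma_0(\mathcal A)\le\sigma\le\omega$, and let $m\ge1$. Then \[ c\big(r_m(\sigma),r_m(\omega),\mathcal A^m\big)=m^2\big(\ell(\omega)-\ell(\sigma)\big), \] where $c(\sigma',\omega',\mathcal B)=\dim\mathcal O_{\mathfrak M_{\sigma'}(\mathcal B)}-\dim\mathcal O_{\mathfrak M_{\omega'}(\mathcal B)}$.
   Context: A segment is a pair $[a,b]$ of integers with $a\le b$; a multisegment is a finite formal sum (multiset) of segments. A bi-sequence of length $k$ is $\mathcal A=\begin{pmatrix}a_1&\cdots&a_k\\ b_1&\cdots&b_k\end{pmatrix}$ with integers $a_1\le\cdots\le a_k$, $b_1\ge\cdots\ge b_k$, $a_i\le b_{k+1-i}+1$. It is regular if the $a_i$ are pairwise distinct and the $b_i$ are pairwise distinct, strongly regular if moreover $\{a_i\}\cap\{b_j+1\}=\emptyset$. $\sigma_0(\mathcal A)$ is defined recursively for $i=k,\dots,1$ by $\sigma_0^{-1}(i)=\max\{j\notin\sigma_0^{-1}(\{i+1,\dots,k\}):a_j\le b_i+1\}$; for $\sigma\ge\sigma_0(\mathcal A)$ (Bruhat order) one has $a_i\le b_{\sigma(i)}+1$ for all $i$, and $\mathfrak M_\sigma(\mathcal A)=\sum_{i=1}^k[a_i,b_{\sigma(i)}]$, where $[b+1,b]$ is regarded as empty. $\mathcal A^m$ is the bi-sequence of length $mk$ obtained by repeating each entry of $\mathcal A$ $m$ times consecutively (in both rows). $W_m=S_m^k\subset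 S_{mk}$ is the block parabolic subgroup, $r_m:S_k\to N_{S_{mk}}(W_m)/W_m$ the block-permutation isomorphism; $\mathfrak M_{r_m(x)}(\mathcal A^m)$ is well defined and equals $m\cdot\mathfrak M_x(\mathcal A)$. For a multisegment $\mathfrak M$, $\mathcal O_{\mathfrak M}$ denotes the corresponding orbit of $\prod_j GL(V_j)$ acting by conjugation on the space of endomorphisms $x$ of a graded vector space $V=\oplus_{j\in\mathbb Z}V_j$ with $xV_j\subset V_{j-1}$: namely the orbit of the operator which is a direct sum, over the segments $[a,b]$ of $\mathfrak M$, of a Jordan chain $e_b\mapsto e_{b-1}\mapsto\cdots\mapsto e_a\mapsto0$ with $e_j\in V_j$. *)

theory Defs
  imports Complex_Main "HOL-Library.Multiset" "HOL-Library.Function_Algebras" "HOL-Combinatorics.Permutations" "HOL-Combinatorics.Transposition"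
begin

text \<open>Bi-sequences of length k are given by two functions a b :: nat => int on the
  index set {0..<k} (0-indexed: entry i of the paper is index i-1 here).\<close>

definition biseq :: "(nat \<Rightarrow> int) \<Rightarrow> (nat \<Rightarrow> int) \<Rightarrow> nat \<Rightarrow> bool" where
  "biseq a b k \<longleftrightarrow>
     (\<forall>i j. i \<le> j \<and> j < k \<longrightarrow> a i \<le> a j) \<and>
     (\<forall>i j. i \<le> j \<and> j < k \<longrightarrow> b j \<le> b i) \<and>
     (\<forall>i<k. a i \<le> b (k - 1 - i) + 1)"

definition regular_biseq :: "(nat \<Rightarrow> int) \<Rightarrow> (nat \<Rightarrow> int) \<Rightarrow> nat \<Rightarrow> bool" where
  "regular_biseq a b k \<longleftrightarrow> biseq a b k \<and> inj_on a {..<k} \<and> inj_on b {..<k}"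

definition strongly_regular_biseq :: "(nat \<Rightarrow> int) \<Rightarrow> (nat \<Rightarrow> int) \<Rightarrow> nat \<Rightarrow> bool" where
  "strongly_regular_biseq a b k \<longleftrightarrow> regular_biseq a b k \<and>
     (\<forall>i<k. \<forall>j<k. a i \<noteq> b j + 1)"

text \<open>Construction of sigma_0: sel a b k n is the list
  [sigma_0^{-1}(k-1), ..., sigma_0^{-1}(k-n)] (0-indexed).\<close>

fun sel :: "(nat \<Rightarrow> int) \<Rightarrow> (nat \<Rightarrow> int) \<Rightarrow> nat \<Rightarrow> nat \<Rightarrow> nat list" where
  "sel a b k 0 = []"
| "sel a b k (Suc n) =
     (let L = sel a b k n; i = k - Suc n
      in L @ [Max {j. j < k \<and> j \<notin> set L \<and> a j \<le> b i + 1}])"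

definition sigma0_inv :: "(nat \<Rightarrow> int) \<Rightarrow> (nat \<Rightarrow> int) \<Rightarrow> nat \<Rightarrow> nat \<Rightarrow> nat" where
  "sigma0_inv a b k i = (if i < k then sel a b k k ! (k - 1 - i) else i)"

definition sigma0 :: "(nat \<Rightarrow> int) \<Rightarrow> (nat \<Rightarrow> int) \<Rightarrow> nat \<Rightarrow> nat \<Rightarrow> nat" where
  "sigma0 a b k j = (if j < k then (THE i. i < k \<and> sigma0_inv a b k i = j) else j)"

definition perm_length :: "nat \<Rightarrow> (nat \<Rightarrow> nat) \<Rightarrow> nat" where
  "perm_length k x = card {(i, j). i < j \<and> j < k \<and> x j < x i}"

definition bruhat_step :: "nat \<Rightarrow> ((nat \<Rightarrow> nat) \<times> (nat \<Rightarrow> nat)) set" where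
  "bruhat_step k = {(x, x \<circ> transpose i j) | x i j.
      x permutes {..<k} \<and> i < k \<and> j < k \<and> i \<noteq> j \<and>
      perm_length k x < perm_length k (x \<circ> transpose i j)}"

definition bruhat_le :: "nat \<Rightarrow> (nat \<Rightarrow> nat) \<Rightarrow> (nat \<Rightarrow> nat) \<Rightarrow> bool" where
  "bruhat_le k x y \<longleftrightarrow> (x, y) \<in> (bruhat_step k)\<^sup>*"

text \<open>Multisegments are multisets of pairs (a,b) (the segment [a,b]).
  M_sigma(A) = sum_i [a_i, b_{sigma(i)}], dropping empty segments [b+1,b].\<close>

definition multiseg :: "(nat \<Rightarrow> int) \<Rightarrow> (nat \<Rightarrow> int) \<Rightarrow> nat \<Rightarrow> (nat \<Rightarrow> nat) \<Rightarrow> (int \<times> int) multiset" where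
  "multiseg a b k \<sigma> =
     image_mset (\<lambda>i. (a i, b (\<sigma> i))) (filter_mset (\<lambda>i. a i \<le> b (\<sigma> i)) (mset [0..<k]))"

text \<open>A^m: each entry repeated m times consecutively (length m*k).\<close>

definition rep :: "nat \<Rightarrow> (nat \<Rightarrow> int) \<Rightarrow> nat \<Rightarrow> int" where
  "rep m a i = a (i div m)"

text \<open>r_m(x): the block permutation (a representative of the coset in N(W_m)/W_m).\<close>

definition rm :: "nat \<Rightarrow> (nat \<Rightarrow> nat) \<Rightarrow> nat \<Rightarrow> nat" where
  "rm m x i = m * x (i div m) + i mod m"

text \<open>For a list of segments, V has basis e_(s,j), s a segment index and
  a_s <= j <= b_s, e_(s,j) in V_j; x e_(s,j) = e_(s,j-1) (or 0 if j = a_s).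
  dim O_x = dim prod_j GL(V_j) - dim Stab(x), and Stab(x) is a nonempty Zariski-open
  subset of the centralizer of x in the Lie algebra prod_j End(V_j), so
  dim Stab(x) equals the linear dimension of that centralizer.\<close>

definition seg_idx :: "(int \<times> int) list \<Rightarrow> (nat \<times> int) set" where
  "seg_idx segs = {(s, j). s < length segs \<and> fst (segs ! s) \<le> j \<and> j \<le> snd (segs ! s)}"

definition nil_op :: "(int \<times> int) list \<Rightarrow> (nat \<times> int) \<times> (nat \<times> int) \<Rightarrow> complex" where
  "nil_op segs = (\<lambda>(p, q). if p \<in> seg_idx segs \<and> q \<in> seg_idx segs \<and>
                              fst p = fst q \<and> snd p = snd q - 1 then 1 else 0)"

definition graded_endos :: "(int \<times> int) list \<Rightarrow> ((nat \<times> int) \<times> (nat \<times> int) \<Rightarrow> complex) set" where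
  "graded_endos segs = {Y. \<forall>p q. Y (p, q) \<noteq> 0 \<longrightarrow>
       p \<in> seg_idx segs \<and> q \<in> seg_idx segs \<and> snd p = snd q}"

definition mat_mult :: "(nat \<times> int) set \<Rightarrow> ((nat \<times> int) \<times> (nat \<times> int) \<Rightarrow> complex) \<Rightarrow>
    ((nat \<times> int) \<times> (nat \<times> int) \<Rightarrow> complex) \<Rightarrow> (nat \<times> int) \<times> (nat \<times> int) \<Rightarrow> complex" where
  "mat_mult I Y Z = (\<lambda>(p, q). \<Sum>r\<in>I. Y (p, r) * Z (r, q))"

definition centralizer :: "(int \<times> int) list \<Rightarrow> ((nat \<times> int) \<times> (nat \<times> int) \<Rightarrow> complex) set" where
  "centralizer segs = {Y \<in> graded_endos segs.
      mat_mult (seg_idx segs) Y (nil_op segs) = mat_mult (seg_idx segs) (nil_op segs) Y}"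

definition orbit_dim_list :: "(int \<times> int) list \<Rightarrow> nat" where
  "orbit_dim_list segs =
     card {(p, q). p \<in> seg_idx segs \<and> q \<in> seg_idx segs \<and> snd p = snd q}
     - vector_space.dim (\<lambda>c Y z. c * Y z) (centralizer segs)"

definition orbit_dim :: "(int \<times> int) multiset \<Rightarrow> nat" where
  "orbit_dim M = orbit_dim_list (SOME segs. mset segs = M)"

definition c_val :: "(nat \<Rightarrow> nat) \<Rightarrow> (nat \<Rightarrow> nat) \<Rightarrow> (nat \<Rightarrow> int) \<Rightarrow> (nat \<Rightarrow> int) \<Rightarrow> nat \<Rightarrow> int" where
  "c_val s w a b k = int (orbit_dim (multiseg a b k s)) - int (orbit_dim (multiseg a b k w))"

end

theory Submission
  imports Defs
begin

text \<open>The centralizer of the nilpotent operator of a multisegment M in the graded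
  endomorphisms has a basis indexed by the ordered pairs of segments (x, y) of M with
  fst y \<le> fst x \<le> snd y \<le> snd x, whence dim O_M is the sum over all ordered pairs of
  |x \<inter> y| minus the indicator of that condition.  Passing from A to A^m replaces every
  segment by m copies, which multiplies this double sum by m^2.  For a strongly regular
  bi-sequence and \<sigma> \<ge> \<sigma>0 all segments [a_i, b_\<sigma>(i)] are nonempty; then the overlaps
  sum to a quantity independent of \<sigma>, and the indicators sum to k + l(\<sigma>) minus the
  \<sigma>-independent number of disjoint pairs.  So dim O_M_\<sigma>(A) + l(\<sigma>) does not depend
  on \<sigma>.\<close>

section \<open>The centralizer of a nilpotent graded operator\<close>

interpretation fun_vs: vector_space "\<lambda>c (Y::'a \<Rightarrow> complex) z. c * Y z"
  by unfold_locales (auto simp: fun_eq_iff algebra_simps)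

lemma sum_fun_apply: "sum f S x = (\<Sum>v\<in>S. f v x)"
  by (induction S rule: infinite_finite_induct) auto

text \<open>The graded maps from the Jordan chain of y to that of x commuting with the chains
  form a line exactly when seg_hom x y, spanned by e_j \<mapsto> e_j for fst x \<le> j \<le> snd y;
  otherwise they are zero.\<close>

definition seg_hom :: "int \<times> int \<Rightarrow> int \<times> int \<Rightarrow> bool" where
  "seg_hom x y \<longleftrightarrow> fst y \<le> fst x \<and> fst x \<le> snd y \<and> snd y \<le> snd x"

definition hom_pairs :: "(int \<times> int) list \<Rightarrow> (nat \<times> nat) set" where
  "hom_pairs segs = {(s, t). s < length segs \<and> t < length segs \<and> seg_hom (segs ! s) (segs ! t)}"

definition hom_basis :: "(int \<times> int) list \<Rightarrow> nat \<times> nat \<Rightarrow> (nat \<times> int) \<times> (nat \<times> int) \<Rightarrow> complex" where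
  "hom_basis segs st = (\<lambda>((s, i), (t, j)). if s = fst st \<and> t = snd st \<and> i = j \<and>
        fst (segs ! s) \<le> i \<and> i \<le> snd (segs ! t) then 1 else 0)"

definition hom_pivot :: "(int \<times> int) list \<Rightarrow> nat \<times> nat \<Rightarrow> (nat \<times> int) \<times> (nat \<times> int)" where
  "hom_pivot segs st = ((fst st, fst (segs ! fst st)), (snd st, fst (segs ! fst st)))"

lemma seg_idx_iff [simp]:
  "(s, j) \<in> seg_idx segs \<longleftrightarrow> s < length segs \<and> fst (segs ! s) \<le> j \<and> j \<le> snd (segs ! s)"
  by (simp add: seg_idx_def)

lemma finite_seg_idx: "finite (seg_idx segs)"
proof -
  have "seg_idx segs = (SIGMA s:{..<length segs}. {fst (segs ! s)..snd (segs ! s)})"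
    by (auto simp: seg_idx_def)
  then show ?thesis by simp
qed

lemma mat_mult_nil_op_right:
  "mat_mult (seg_idx segs) Y (nil_op segs) (p, (t, j)) =
    (if (t, j) \<in> seg_idx segs \<and> (t, j - 1) \<in> seg_idx segs then Y (p, (t, j - 1)) else 0)"
proof -
  have "mat_mult (seg_idx segs) Y (nil_op segs) (p, (t, j))
      = (\<Sum>r\<in>seg_idx segs. if r = (t, j - 1) then (if (t, j) \<in> seg_idx segs then Y (p, r) else 0) else 0)"
    unfolding mat_mult_def by (auto simp: nil_op_def intro!: sum.cong)
  then show ?thesis by (auto simp: finite_seg_idx)
qed

lemma mat_mult_nil_op_left:
  "mat_mult (seg_idx segs) (nil_op segs) Y ((s, j), q) =
    (if (s, j) \<in> seg_idx segs \<and> (s, j + 1) \<in> seg_idx segs then Y ((s, j + 1), q) else 0)"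
proof -
  have "mat_mult (seg_idx segs) (nil_op segs) Y ((s, j), q)
      = (\<Sum>r\<in>seg_idx segs. if r = (s, j + 1) then (if (s, j) \<in> seg_idx segs then Y (r, q) else 0) else 0)"
    unfolding mat_mult_def by (auto simp: nil_op_def intro!: sum.cong)
  then show ?thesis by (auto simp: finite_seg_idx)
qed

lemma centralizer_iff:
  "Y \<in> centralizer segs \<longleftrightarrow> Y \<in> graded_endos segs \<and>
    (\<forall>s i t j. (if (t, j) \<in> seg_idx segs \<and> (t, j - 1) \<in> seg_idx segs then Y ((s, i), (t, j - 1)) else 0)
       = (if (s, i) \<in> seg_idx segs \<and> (s, i + 1) \<in> seg_idx segs then Y ((s, i + 1), (t, j)) else 0))"
  by (auto simp: centralizer_def fun_eq_iff mat_mult_nil_op_left mat_mult_nil_op_right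
           simp del: seg_idx_iff)

text \<open>The entry ((s, i), (t, i + 1)) of Y x = x Y.\<close>

lemma centralizer_shift:
  assumes "Y \<in> centralizer segs"
  shows "(if (t, i + 1) \<in> seg_idx segs \<and> (t, i) \<in> seg_idx segs then Y ((s, i), (t, i)) else 0)
       = (if (s, i) \<in> seg_idx segs \<and> (s, i + 1) \<in> seg_idx segs then Y ((s, i + 1), (t, i + 1)) else 0)"
  using assms unfolding centralizer_iff by (metis add_diff_cancel_right')

lemma centralizer_diag_const:
  assumes Y: "Y \<in> centralizer segs" and st: "s < length segs" "t < length segs"
  defines "lo \<equiv> max (fst (segs ! s)) (fst (segs ! t))"
  assumes j: "lo \<le> j" "j \<le> min (snd (segs ! s)) (snd (segs ! t))"
  shows "Y ((s, j), (t, j)) = Y ((s, lo), (t, lo))"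
  using j
proof (induction j rule: int_ge_induct)
  case base
  then show ?case by simp
next
  case (step i)
  have "Y ((s, i), (t, i)) = Y ((s, i + 1), (t, i + 1))"
    using centralizer_shift[OF Y, of t i s] step st by (auto simp: lo_def)
  with step show ?case by simp
qed

text \<open>If fst s < fst t, commuting at degree fst t kills the lowest entry of the diagonal;
  if snd s < snd t, commuting at degree snd s + 1 kills the highest one.\<close>

lemma centralizer_diag_zero:
  assumes Y: "Y \<in> centralizer segs" and st: "s < length segs" "t < length segs"
    and j: "max (fst (segs ! s)) (fst (segs ! t)) \<le> j" "j \<le> min (snd (segs ! s)) (snd (segs ! t))"
    and not_hom: "\<not> seg_hom (segs ! s) (segs ! t)"
  shows "Y ((s, j), (t, j)) = 0"
proof -
  let ?lo = "max (fst (segs ! s)) (fst (segs ! t))"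
  have "fst (segs ! s) < fst (segs ! t) \<or> snd (segs ! s) < snd (segs ! t)"
    using not_hom j by (auto simp: seg_hom_def)
  then show ?thesis
  proof
    assume "fst (segs ! s) < fst (segs ! t)"
    then have "Y ((s, ?lo), (t, ?lo)) = 0"
      using centralizer_shift[OF Y, of t "fst (segs ! t) - 1" s] st j by auto
    then show ?thesis
      using centralizer_diag_const[OF Y st j] by simp
  next
    assume "snd (segs ! s) < snd (segs ! t)"
    then have "Y ((s, snd (segs ! s)), (t, snd (segs ! s))) = 0"
      using centralizer_shift[OF Y, of t "snd (segs ! s)" s] st j by auto
    then show ?thesis
      using centralizer_diag_const[OF Y st, of j] centralizer_diag_const[OF Y st, of "snd (segs ! s)"] j
        \<open>snd (segs ! s) < snd (segs ! t)\<close> by simp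
  qed
qed

lemma centralizer_support:
  assumes Y: "Y \<in> centralizer segs" and nz: "Y ((s, i), (t, j)) \<noteq> 0"
  shows "(s, t) \<in> hom_pairs segs \<and> i = j \<and> fst (segs ! s) \<le> i \<and> i \<le> snd (segs ! t)"
proof -
  have "(s, i) \<in> seg_idx segs" "(t, j) \<in> seg_idx segs" "i = j"
    using Y nz by (auto simp: centralizer_def graded_endos_def simp del: seg_idx_iff)
  then have st: "s < length segs" "t < length segs"
    and j: "max (fst (segs ! s)) (fst (segs ! t)) \<le> j" "j \<le> min (snd (segs ! s)) (snd (segs ! t))"
    by auto
  have "seg_hom (segs ! s) (segs ! t)"
    using centralizer_diag_zero[OF Y st j] nz \<open>i = j\<close> by blast
  with st j \<open>i = j\<close> show ?thesis by (auto simp: hom_pairs_def seg_hom_def)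
qed

lemma centralizer_eq_pivot:
  assumes Y: "Y \<in> centralizer segs" and st: "(s, t) \<in> hom_pairs segs"
    and i: "fst (segs ! s) \<le> i" "i \<le> snd (segs ! t)"
  shows "Y ((s, i), (t, i)) = Y (hom_pivot segs (s, t))"
  using st i centralizer_diag_const[OF Y, of s t i]
  by (auto simp: hom_pairs_def seg_hom_def hom_pivot_def max_def min_def)

lemma finite_hom_pairs: "finite (hom_pairs segs)"
  by (rule finite_subset[of _ "{..<length segs} \<times> {..<length segs}"]) (auto simp: hom_pairs_def)

lemma sum_hom_basis_apply:
  "(\<Sum>st\<in>hom_pairs segs. f st * hom_basis segs st ((s, i), (t, j))) =
     (if (s, t) \<in> hom_pairs segs then f (s, t) * hom_basis segs (s, t) ((s, i), (t, j)) else 0)"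
  by (subst sum.mono_neutral_right[OF finite_hom_pairs, of "{(s, t)} \<inter> hom_pairs segs"])
     (auto simp: hom_basis_def split: if_splits)

lemma centralizer_expansion:
  assumes Y: "Y \<in> centralizer segs"
  shows "Y = (\<Sum>st\<in>hom_pairs segs. (\<lambda>z. Y (hom_pivot segs st) * hom_basis segs st z))"
proof
  fix z :: "(nat \<times> int) \<times> (nat \<times> int)"
  obtain s i t j where z: "z = ((s, i), (t, j))" by (metis prod.exhaust)
  have "Y z = (if (s, t) \<in> hom_pairs segs then Y (hom_pivot segs (s, t)) * hom_basis segs (s, t) z else 0)"
  proof (cases "Y z = 0")
    case True
    then show ?thesis
      using centralizer_eq_pivot[OF Y, of s t i] by (auto simp: z hom_basis_def)
  next
    case False
    then show ?thesis
      using centralizer_support[OF Y] centralizer_eq_pivot[OF Y, of s t i] by (auto simp: z hom_basis_def)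
  qed
  then show "Y z = (\<Sum>st\<in>hom_pairs segs. (\<lambda>z. Y (hom_pivot segs st) * hom_basis segs st z)) z"
    by (simp add: sum_fun_apply sum_hom_basis_apply z)
qed

lemma hom_basis_in_centralizer:
  assumes "st \<in> hom_pairs segs"
  shows "hom_basis segs st \<in> centralizer segs"
proof -
  obtain s t where st: "st = (s, t)" "s < length segs" "t < length segs" "seg_hom (segs ! s) (segs ! t)"
    using assms by (auto simp: hom_pairs_def)
  have "hom_basis segs st \<in> graded_endos segs"
    unfolding graded_endos_def
  proof (intro CollectI allI impI)
    fix p q :: "nat \<times> int"
    assume nz: "hom_basis segs st (p, q) \<noteq> 0"
    obtain s' i t' j where pq: "p = (s', i)" "q = (t', j)" by (cases p, cases q)
    have "s' = s" "t' = t" "i = j" "fst (segs ! s) \<le> i" "i \<le> snd (segs ! t)"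
      using nz by (simp_all add: hom_basis_def st(1) pq split: if_splits)
    with st(2-4) show "p \<in> seg_idx segs \<and> q \<in> seg_idx segs \<and> snd p = snd q"
      by (simp add: pq seg_hom_def)
  qed
  moreover have "(if (t', j) \<in> seg_idx segs \<and> (t', j - 1) \<in> seg_idx segs
          then hom_basis segs st ((s', i), (t', j - 1)) else 0)
      = (if (s', i) \<in> seg_idx segs \<and> (s', i + 1) \<in> seg_idx segs
          then hom_basis segs st ((s', i + 1), (t', j)) else 0)" for s' i t' j
  proof (cases "s' = s \<and> t' = t \<and> j = i + 1")
    case True
    then show ?thesis
      using st(2-4) by (simp add: hom_basis_def st(1) seg_hom_def)
  next
    case False
    then show ?thesis by (auto simp: hom_basis_def st(1) simp del: seg_idx_iff)
  qed
  ultimately show ?thesis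
    unfolding centralizer_iff by blast
qed

lemma hom_basis_pivot:
  "st \<in> hom_pairs segs \<Longrightarrow> hom_basis segs st' (hom_pivot segs st) = (if st' = st then 1 else 0)"
  by (cases st, cases st') (simp add: hom_basis_def hom_pivot_def hom_pairs_def seg_hom_def)

lemma inj_on_hom_basis: "inj_on (hom_basis segs) (hom_pairs segs)"
  by (rule inj_onI) (metis hom_basis_pivot zero_neq_one)

lemma independent_hom_basis: "fun_vs.independent (hom_basis segs ` hom_pairs segs)"
  unfolding fun_vs.dependent_finite[OF finite_imageI[OF finite_hom_pairs]]
proof
  assume "\<exists>u. (\<exists>v\<in>hom_basis segs ` hom_pairs segs. u v \<noteq> 0) \<and>
    (\<Sum>v\<in>hom_basis segs ` hom_pairs segs. (\<lambda>z. u v * v z)) = 0"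
  then obtain u st where zero: "(\<Sum>v\<in>hom_basis segs ` hom_pairs segs. (\<lambda>z. u v * v z)) = 0"
    and st: "st \<in> hom_pairs segs" and nz: "u (hom_basis segs st) \<noteq> 0"
    by blast
  have "(\<Sum>st'\<in>hom_pairs segs. (\<lambda>z. u (hom_basis segs st') * hom_basis segs st' z)) = 0"
    using zero sum.reindex[OF inj_on_hom_basis, of "\<lambda>v z. u v * v z"] by (simp add: comp_def)
  then have "(\<Sum>st'\<in>hom_pairs segs. (\<lambda>z. u (hom_basis segs st') * hom_basis segs st' z)) (hom_pivot segs st) = 0"
    by simp
  then have "(\<Sum>st'\<in>hom_pairs segs. u (hom_basis segs st') * hom_basis segs st' (hom_pivot segs st)) = 0"
    by (simp only: sum_fun_apply)
  moreover have "(\<Sum>st'\<in>hom_pairs segs. u (hom_basis segs st') * hom_basis segs st' (hom_pivot segs st))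
      = (\<Sum>st'\<in>hom_pairs segs. if st' = st then u (hom_basis segs st') else 0)"
    by (rule sum.cong) (simp_all add: hom_basis_pivot[OF st])
  ultimately have "u (hom_basis segs st) = 0"
    using st finite_hom_pairs by (simp add: sum.delta')
  with nz show False by contradiction
qed

lemma dim_centralizer: "fun_vs.dim (centralizer segs) = card (hom_pairs segs)"
proof -
  have "centralizer segs \<subseteq> fun_vs.span (hom_basis segs ` hom_pairs segs)"
  proof
    fix Y assume "Y \<in> centralizer segs"
    then have "Y = (\<Sum>st\<in>hom_pairs segs. (\<lambda>z. Y (hom_pivot segs st) * hom_basis segs st z))"
      by (rule centralizer_expansion)
    also have "\<dots> \<in> fun_vs.span (hom_basis segs ` hom_pairs segs)"
      by (intro fun_vs.span_sum fun_vs.span_scale fun_vs.span_base) auto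
    finally show "Y \<in> fun_vs.span (hom_basis segs ` hom_pairs segs)" .
  qed
  then have "card (hom_basis segs ` hom_pairs segs) = fun_vs.dim (centralizer segs)"
    using hom_basis_in_centralizer independent_hom_basis by (intro fun_vs.basis_card_eq_dim) auto
  then show ?thesis
    by (simp add: card_image[OF inj_on_hom_basis])
qed

section \<open>Orbit dimensions of multisegments\<close>

definition seg_overlap :: "int \<times> int \<Rightarrow> int \<times> int \<Rightarrow> nat" where
  "seg_overlap x y = card ({fst x..snd x} \<inter> {fst y..snd y})"

definition orbit_dim_term :: "int \<times> int \<Rightarrow> int \<times> int \<Rightarrow> int" where
  "orbit_dim_term x y = int (seg_overlap x y) - of_bool (seg_hom x y)"

lemma card_graded_pairs:
  "card {(p, q). p \<in> seg_idx segs \<and> q \<in> seg_idx segs \<and> snd p = snd q}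
    = (\<Sum>s<length segs. \<Sum>t<length segs. seg_overlap (segs ! s) (segs ! t))"
proof -
  let ?L = "{..<length segs}"
  let ?B = "\<lambda>(s, t). {fst (segs ! s)..snd (segs ! s)} \<inter> {fst (segs ! t)..snd (segs ! t)}"
  let ?f = "\<lambda>((s, t), j). ((s, j), (t, j))"
  have "{(p, q). p \<in> seg_idx segs \<and> q \<in> seg_idx segs \<and> snd p = snd q} = ?f ` Sigma (?L \<times> ?L) ?B"
    by (auto simp: image_iff)
  moreover have "inj_on ?f (Sigma (?L \<times> ?L) ?B)"
    by (rule inj_onI) auto
  ultimately have "card {(p, q). p \<in> seg_idx segs \<and> q \<in> seg_idx segs \<and> snd p = snd q}
      = card (Sigma (?L \<times> ?L) ?B)"
    by (simp add: card_image)
  also have "\<dots> = (\<Sum>st\<in>?L \<times> ?L. card (?B st))"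
    by (rule card_SigmaI) auto
  finally show ?thesis
    by (simp add: seg_overlap_def sum.cartesian_product case_prod_beta)
qed

lemma card_hom_pairs:
  "card (hom_pairs segs) = (\<Sum>s<length segs. \<Sum>t<length segs. of_bool (seg_hom (segs ! s) (segs ! t)))"
proof -
  have "hom_pairs segs = {..<length segs} \<times> {..<length segs} \<inter> {st. seg_hom (segs ! fst st) (segs ! snd st)}"
    by (auto simp: hom_pairs_def)
  then show ?thesis
    unfolding sum.cartesian_product by (simp add: case_prod_beta)
qed

lemma seg_hom_imp_overlap: "seg_hom x y \<Longrightarrow> 1 \<le> seg_overlap x y"
proof -
  assume "seg_hom x y"
  then have "fst x \<in> {fst x..snd x} \<inter> {fst y..snd y}"
    by (auto simp: seg_hom_def)
  then show ?thesis
    unfolding seg_overlap_def by (metis One_nat_def Suc_leI card_gt_0_iff emptyE finite_Int finite_atLeastAtMost_int)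
qed

lemma orbit_dim_list_eq:
  "int (orbit_dim_list segs) = (\<Sum>s<length segs. \<Sum>t<length segs. orbit_dim_term (segs ! s) (segs ! t))"
proof -
  have "card (hom_pairs segs) \<le> (\<Sum>s<length segs. \<Sum>t<length segs. seg_overlap (segs ! s) (segs ! t))"
    unfolding card_hom_pairs by (intro sum_mono) (auto dest: seg_hom_imp_overlap)
  then have "int (orbit_dim_list segs) = (\<Sum>s<length segs. \<Sum>t<length segs. int (seg_overlap (segs ! s) (segs ! t)))
      - (\<Sum>s<length segs. \<Sum>t<length segs. of_bool (seg_hom (segs ! s) (segs ! t)))"
    unfolding orbit_dim_list_def dim_centralizer card_graded_pairs
    by (simp add: of_nat_diff card_hom_pairs of_nat_sum)
  then show ?thesis
    by (simp add: orbit_dim_term_def sum_subtractf)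
qed

lemma sum_mset_mset_nth: "(\<Sum>x\<in>#mset xs. f x) = (\<Sum>s<length xs. f (xs ! s))"
  by (simp add: sum_mset_sum_list sum_list_sum_nth atLeast0LessThan flip: mset_map)

lemma orbit_dim_eq: "int (orbit_dim M) = (\<Sum>x\<in>#M. \<Sum>y\<in>#M. orbit_dim_term x y)"
proof -
  define segs where "segs = (SOME segs. mset segs = M)"
  have M: "mset segs = M"
    unfolding segs_def by (rule someI_ex[OF ex_mset])
  have "int (orbit_dim M) = (\<Sum>s<length segs. \<Sum>t<length segs. orbit_dim_term (segs ! s) (segs ! t))"
    by (simp add: orbit_dim_def orbit_dim_list_eq flip: segs_def)
  also have "\<dots> = (\<Sum>x\<in>#M. \<Sum>y\<in>#M. orbit_dim_term x y)"
    by (simp add: sum_mset_mset_nth flip: M)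
  finally show ?thesis .
qed

lemma orbit_dim_multiseg:
  assumes "\<forall>i<k. a i \<le> b (x i)"
  shows "int (orbit_dim (multiseg a b k x)) = (\<Sum>i<k. \<Sum>j<k. orbit_dim_term (a i, b (x i)) (a j, b (x j)))"
proof -
  have "filter_mset (\<lambda>i. a i \<le> b (x i)) (mset [0..<k]) = mset [0..<k]"
    using assms by (auto simp: filter_mset_eq_conv)
  then have "multiseg a b k x = mset (map (\<lambda>i. (a i, b (x i))) [0..<k])"
    unfolding multiseg_def by (simp only: mset_map)
  then show ?thesis
    by (simp only: orbit_dim_eq sum_mset_mset_nth) simp
qed

lemma sum_lessThan_mult_div:
  "(\<Sum>i<m * k. f (i div m)) = of_nat m * (\<Sum>q<k. f q :: 'a :: comm_semiring_1)"
proof -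
  have "(\<Sum>i\<in>{q * m..<q * m + m}. f (i div m)) = of_nat m * f q" for q
  proof -
    have "(\<Sum>i\<in>{q * m..<q * m + m}. f (i div m)) = (\<Sum>i\<in>{q * m..<q * m + m}. f q)"
      by (intro sum.cong refl) (auto intro!: arg_cong[of _ _ f] div_nat_eqI simp: mult.commute)
    then show ?thesis by simp
  qed
  then have "(\<Sum>i<k * m. f (i div m)) = (\<Sum>q<k. of_nat m * f q)"
    by (simp flip: sum.nat_group)
  then show ?thesis
    by (simp add: mult.commute sum_distrib_left)
qed

lemma orbit_dim_multiseg_rep:
  assumes "\<forall>i<k. a i \<le> b (x i)" and "m \<ge> 1"
  shows "int (orbit_dim (multiseg (rep m a) (rep m b) (m * k) (rm m x)))
     = int (m ^ 2) * (\<Sum>i<k. \<Sum>j<k. orbit_dim_term (a i, b (x i)) (a j, b (x j)))"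
proof -
  have rep_rm: "rep m b (rm m x i) = b (x (i div m))" for i
    using \<open>m \<ge> 1\<close> by (simp add: rep_def rm_def)
  have nonempty: "\<forall>i<m * k. rep m a i \<le> rep m b (rm m x i)"
  proof (intro allI impI)
    fix i assume "i < m * k"
    then have "i div m < k"
      by (simp add: less_mult_imp_div_less mult.commute)
    with assms(1) show "rep m a i \<le> rep m b (rm m x i)"
      unfolding rep_rm by (simp add: rep_def)
  qed
  have "int (orbit_dim (multiseg (rep m a) (rep m b) (m * k) (rm m x)))
      = (\<Sum>i<m * k. \<Sum>j<m * k. orbit_dim_term (a (i div m), b (x (i div m))) (a (j div m), b (x (j div m))))"
    unfolding orbit_dim_multiseg[where x = "rm m x", OF nonempty] rep_rm by (simp add: rep_def)
  also have "\<dots> = (\<Sum>i<m * k. of_nat m * (\<Sum>j<k. orbit_dim_term (a (i div m), b (x (i div m))) (a j, b (x j))))"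
    by (simp add: sum_lessThan_mult_div[where f = "\<lambda>j. orbit_dim_term (a _, b (x _)) (a j, b (x j))"])
  also have "\<dots> = of_nat m * (\<Sum>i<k. of_nat m * (\<Sum>j<k. orbit_dim_term (a i, b (x i)) (a j, b (x j))))"
    by (rule sum_lessThan_mult_div)
  finally show ?thesis
    by (simp add: power2_eq_square sum_distrib_left mult.assoc)
qed

section \<open>Orbit dimension plus length is constant\<close>

lemma seg_overlap_eq_max:
  assumes "a \<le> b + 1" "c \<le> d + 1"
  shows "int (seg_overlap (a, b) (c, d)) = max a (d + 1) + max (b + 1) c - max a c - max (b + 1) (d + 1)"
proof -
  have "{a..b} \<inter> {c..d} = {max a c..min b d}" by auto
  then show ?thesis
    using assms by (auto simp: seg_overlap_def max_def min_def)
qed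

lemma sum_sum_permutes_separable:
  fixes f g h u :: "nat \<Rightarrow> nat \<Rightarrow> 'a :: comm_monoid_add"
  assumes x: "x permutes {..<k}"
  shows "(\<Sum>i<k. \<Sum>j<k. f i j + g i (x j) + h (x i) j + u (x i) (x j))
       = (\<Sum>i<k. \<Sum>j<k. f i j + g i j + h i j + u i j)"
proof -
  have perm: "(\<Sum>j<k. v (x j)) = (\<Sum>j<k. v j)" for v :: "nat \<Rightarrow> 'a"
    using sum.permute[OF x, of v] by (simp add: comp_def)
  have "(\<Sum>i<k. \<Sum>j<k. g i (x j)) = (\<Sum>i<k. \<Sum>j<k. g i j)"
    by (simp add: perm)
  moreover have "(\<Sum>i<k. \<Sum>j<k. h (x i) j) = (\<Sum>i<k. \<Sum>j<k. h i j)"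
    by (rule perm)
  moreover have "(\<Sum>i<k. \<Sum>j<k. u (x i) (x j)) = (\<Sum>i<k. \<Sum>j<k. u i j)"
    by (simp add: perm perm[of "\<lambda>i. \<Sum>j<k. u i j"])
  ultimately show ?thesis
    by (simp add: sum.distrib)
qed

lemma int_perm_length_eq_sum:
  "int (perm_length k x) = (\<Sum>i<k. \<Sum>j<k. of_bool (j < i \<and> x i < x j))"
proof -
  have "{(i, j). i < j \<and> j < k \<and> x j < x i} = {..<k} \<times> {..<k} \<inter> {z. fst z < snd z \<and> x (snd z) < x (fst z)}"
    by auto
  then have "int (perm_length k x) = (\<Sum>i<k. \<Sum>j<k. of_bool (i < j \<and> x j < x i))"
    unfolding perm_length_def sum.cartesian_product by (simp add: case_prod_beta)
  also have "\<dots> = (\<Sum>j<k. \<Sum>i<k. of_bool (i < j \<and> x j < x i))"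
    by (rule sum.swap)
  finally show ?thesis .
qed

lemma seg_hom_count:
  fixes a b :: "nat \<Rightarrow> int"
  assumes a: "\<And>i j. i < j \<Longrightarrow> j < k \<Longrightarrow> a i < a j"
    and b: "\<And>i j. i < j \<Longrightarrow> j < k \<Longrightarrow> b j < b i"
    and nonempty: "\<forall>i<k. a i \<le> b (x i)"
    and x: "x permutes {..<k}" and ij: "i < k" "j < k"
  shows "of_bool (seg_hom (a i, b (x i)) (a j, b (x j))) + of_bool (b (x j) < a i)
    = of_bool (i = j) + (of_bool (j < i \<and> x i < x j) :: int)"
proof -
  have xk: "x i < k" "x j < k"
    using permutes_in_image[OF x] ij by auto
  have "x i \<noteq> x j" if "i \<noteq> j"
    using permutes_inj[OF x] that by (auto dest: injD)
  then consider "i = j" | "j < i" "x i < x j" | "j < i" "x j < x i" | "i < j"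
    by (metis linorder_neqE_nat)
  then show ?thesis
  proof cases
    case 2
    then show ?thesis
      using a[of j i] b[of "x i" "x j"] ij xk by (auto simp: seg_hom_def)
  next
    case 3
    then show ?thesis
      using a[of j i] b[of "x j" "x i"] nonempty ij xk by (auto simp: seg_hom_def)
  next
    case 4
    then show ?thesis
      using a[of i j] nonempty ij by (auto simp: seg_hom_def)
  qed (use nonempty ij in \<open>auto simp: seg_hom_def\<close>)
qed

text \<open>The right-hand side does not depend on x: by seg_overlap_eq_max each overlap is a
  sum of terms involving one left and one right end point only, and summing over all pairs
  commutes with permuting the right end points.\<close>

lemma orbit_dim_sum_plus_perm_length:
  fixes a b :: "nat \<Rightarrow> int"
  assumes a: "\<And>i j. i < j \<Longrightarrow> j < k \<Longrightarrow> a i < a j"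
    and b: "\<And>i j. i < j \<Longrightarrow> j < k \<Longrightarrow> b j < b i"
    and nonempty: "\<forall>i<k. a i \<le> b (x i)" and x: "x permutes {..<k}"
  shows "(\<Sum>i<k. \<Sum>j<k. orbit_dim_term (a i, b (x i)) (a j, b (x j))) + int (perm_length k x)
     = (\<Sum>i<k. \<Sum>j<k. max (a i) (b j + 1) + max (b i + 1) (a j) - max (a i) (a j) - max (b i + 1) (b j + 1))
       - int k + (\<Sum>i<k. \<Sum>j<k. of_bool (b j < a i))"
proof -
  have "(\<Sum>i<k. \<Sum>j<k. int (seg_overlap (a i, b (x i)) (a j, b (x j))))
      = (\<Sum>i<k. \<Sum>j<k. - max (a i) (a j) + max (a i) (b (x j) + 1) + max (b (x i) + 1) (a j)
                         + - max (b (x i) + 1) (b (x j) + 1))"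
  proof (intro sum.cong refl)
    fix i j assume "i \<in> {..<k}" "j \<in> {..<k}"
    then have "a i \<le> b (x i) + 1" "a j \<le> b (x j) + 1"
      using nonempty by auto
    then show "int (seg_overlap (a i, b (x i)) (a j, b (x j))) = - max (a i) (a j) + max (a i) (b (x j) + 1)
        + max (b (x i) + 1) (a j) + - max (b (x i) + 1) (b (x j) + 1)"
      by (simp add: seg_overlap_eq_max)
  qed
  also have "\<dots> = (\<Sum>i<k. \<Sum>j<k. - max (a i) (a j) + max (a i) (b j + 1) + max (b i + 1) (a j)
                         + - max (b i + 1) (b j + 1))"
    by (rule sum_sum_permutes_separable[OF x])
  finally have overlap: "(\<Sum>i<k. \<Sum>j<k. int (seg_overlap (a i, b (x i)) (a j, b (x j))))
      = (\<Sum>i<k. \<Sum>j<k. max (a i) (b j + 1) + max (b i + 1) (a j) - max (a i) (a j) - max (b i + 1) (b j + 1))"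
    by (simp add: algebra_simps)
  have "(\<Sum>i<k. \<Sum>j<k. of_bool (seg_hom (a i, b (x i)) (a j, b (x j))) + of_bool (b (x j) < a i))
      = (\<Sum>i<k. \<Sum>j<k. of_bool (i = j) + (of_bool (j < i \<and> x i < x j) :: int))"
    using seg_hom_count[OF a b nonempty x] by (intro sum.cong refl) auto
  moreover have "(\<Sum>j<k. of_bool (b (x j) < a i)) = (\<Sum>j<k. (of_bool (b j < a i) :: int))" for i
    using sum.permute[OF x, of "\<lambda>j. of_bool (b j < a i)"] unfolding comp_def by (rule sym)
  ultimately have "(\<Sum>i<k. \<Sum>j<k. of_bool (seg_hom (a i, b (x i)) (a j, b (x j))))
      = int k + int (perm_length k x) - (\<Sum>i<k. \<Sum>j<k. (of_bool (b j < a i) :: int))"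
    by (simp add: sum.distrib int_perm_length_eq_sum)
  with overlap show ?thesis
    by (simp add: orbit_dim_term_def sum_subtractf)
qed

section \<open>Admissibility above \<sigma>0 in the Bruhat order\<close>

lemma strongly_regular_biseq_strict_mono:
  assumes "strongly_regular_biseq a b k" "i < j" "j < k"
  shows "a i < a j" "b j < b i"
proof -
  have "a i \<le> a j" "b j \<le> b i" "a i \<noteq> a j" "b i \<noteq> b j"
    using assms by (auto simp: strongly_regular_biseq_def regular_biseq_def biseq_def dest: inj_onD)
  then show "a i < a j" "b j < b i" by auto
qed

lemma strongly_regular_biseq_nonempty:
  assumes "strongly_regular_biseq a b k" "x permutes {..<k}" "\<forall>i<k. a i \<le> b (x i) + 1"
  shows "\<forall>i<k. a i \<le> b (x i)"
proof (intro allI impI)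
  fix i assume "i < k"
  moreover have "x i < k"
    using permutes_in_image[OF assms(2)] \<open>i < k\<close> by auto
  ultimately have "a i \<noteq> b (x i) + 1" "a i \<le> b (x i) + 1"
    using assms(1,3) by (auto simp: strongly_regular_biseq_def)
  then show "a i \<le> b (x i)" by simp
qed

text \<open>The injection fixes the pairs with exactly one entry in {i, j} and the other strictly
  between i and j, and conjugates all other pairs by the transposition.\<close>

lemma perm_length_transpose_le:
  assumes ij: "i < j" "j < k" and x: "x j < x i"
  shows "perm_length k (x \<circ> transpose i j) \<le> perm_length k x"
proof -
  let ?y = "x \<circ> transpose i j"
  let ?Iy = "{(p, q). p < q \<and> q < k \<and> ?y q < ?y p}"
  let ?Ix = "{(p, q). p < q \<and> q < k \<and> x q < x p}"
  define \<phi> where "\<phi> = (\<lambda>(p, q). if (p = i \<and> i < q \<and> q < j) \<or> (q = j \<and> i < p \<and> p < j)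
    then (p, q) else (transpose i j p, transpose i j q))"
  have into: "\<phi> ` ?Iy \<subseteq> ?Ix"
  proof
    fix z assume "z \<in> \<phi> ` ?Iy"
    then obtain p q where pq: "p < q" "q < k" "?y q < ?y p" and z: "z = \<phi> (p, q)"
      by auto
    then have "(p, q) \<noteq> (i, j)" using x by auto
    with pq ij x show "z \<in> ?Ix"
      by (auto simp: z \<phi>_def transpose_def split: if_splits)
  qed
  have inj: "inj_on \<phi> ?Iy"
    using ij by (auto simp: inj_on_def \<phi>_def transpose_def split: if_splits)
  have "finite ?Ix"
    by (rule finite_subset[of _ "{..<k} \<times> {..<k}"]) auto
  then show ?thesis
    unfolding perm_length_def by (rule card_inj_on_le[OF inj into])
qed

lemma bruhat_step_admissible:
  assumes bs: "biseq a b k" and step: "(x, y) \<in> bruhat_step k"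
    and adm: "\<forall>i<k. a i \<le> b (x i) + 1"
  shows "\<forall>i<k. a i \<le> b (y i) + 1"
proof -
  have a: "\<And>i j. i \<le> j \<Longrightarrow> j < k \<Longrightarrow> a i \<le> a j" and b: "\<And>i j. i \<le> j \<Longrightarrow> j < k \<Longrightarrow> b j \<le> b i"
    using bs by (auto simp: biseq_def)
  obtain i j where x: "x permutes {..<k}" and ij: "i < j" "j < k"
    and y: "y = x \<circ> transpose i j" and longer: "perm_length k x < perm_length k (x \<circ> transpose i j)"
    using step unfolding bruhat_step_def
    by (auto simp: transpose_commute) (metis linorder_neqE_nat transpose_commute)
  have "x i \<noteq> x j"
    using permutes_inj[OF x] ij by (auto dest: injD)
  then have "x i < x j"
    using perm_length_transpose_le[OF ij, of x] longer by linarith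
  then have "b (x j) \<le> b (x i)"
    using b permutes_in_image[OF x] ij by auto
  then show ?thesis
    using adm a[of i j] ij by (auto simp: y transpose_def)
qed

lemma bruhat_le_admissible:
  assumes "biseq a b k" "bruhat_le k x y" "\<forall>i<k. a i \<le> b (x i) + 1"
  shows "\<forall>i<k. a i \<le> b (y i) + 1"
  using assms(2,3) unfolding bruhat_le_def
  by (induction rule: rtrancl_induct) (use bruhat_step_admissible[OF assms(1)] in blast)+

lemma sel_invariant:
  assumes bs: "biseq a b k" and "n \<le> k"
  shows "length (sel a b k n) = n \<and> distinct (sel a b k n) \<and> set (sel a b k n) \<subseteq> {..<k}
     \<and> (\<forall>p<n. a (sel a b k n ! p) \<le> b (k - 1 - p) + 1)"
  using \<open>n \<le> k\<close>
proof (induction n)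
  case 0
  then show ?case by simp
next
  case (Suc n)
  let ?L = "sel a b k n"
  let ?S = "{j. j < k \<and> j \<notin> set ?L \<and> a j \<le> b (k - Suc n) + 1}"
  have IH: "length ?L = n" "distinct ?L" "set ?L \<subseteq> {..<k}" "\<forall>p<n. a (?L ! p) \<le> b (k - 1 - p) + 1"
    using Suc by auto
  txt \<open>Some index in {0..n} is still free, and it is admissible since a is increasing.\<close>
  obtain j where j: "j \<le> n" "j \<notin> set ?L"
  proof -
    have "\<not> {0..n} \<subseteq> set ?L"
      using card_mono[of "set ?L" "{0..n}"] IH(1) distinct_card[OF IH(2)] by auto
    then obtain j where "j \<in> {0..n}" "j \<notin> set ?L"
      by blast
    then show ?thesis using that by simp
  qed
  have "a j \<le> a n" "a n \<le> b (k - Suc n) + 1"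
    using bs Suc.prems j(1) by (auto simp: biseq_def)
  then have "j \<in> ?S"
    using j Suc.prems by auto
  then have M: "Max ?S \<in> ?S"
    by (intro Max_in) auto
  have "sel a b k (Suc n) = ?L @ [Max ?S]"
    by (simp add: Let_def)
  with IH M show ?case
    by (auto simp: nth_append less_Suc_eq Suc_diff_Suc)
qed

lemma sigma0_admissible:
  assumes bs: "biseq a b k"
  shows "\<forall>j<k. a j \<le> b (sigma0 a b k j) + 1"
proof (intro allI impI)
  fix j assume "j < k"
  let ?L = "sel a b k k"
  have L: "length ?L = k" "distinct ?L" "set ?L \<subseteq> {..<k}" "\<forall>p<k. a (?L ! p) \<le> b (k - 1 - p) + 1"
    using sel_invariant[OF bs order.refl] by auto
  then have "set ?L = {..<k}"
    by (simp add: card_subset_eq distinct_card)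
  then obtain p where p: "p < k" "?L ! p = j"
    using \<open>j < k\<close> L(1) by (metis in_set_conv_nth lessThan_iff)
  have "(THE i. i < k \<and> sigma0_inv a b k i = j) = k - 1 - p"
  proof (rule the_equality)
    show "k - 1 - p < k \<and> sigma0_inv a b k (k - 1 - p) = j"
      using p by (simp add: sigma0_inv_def)
    fix i assume "i < k \<and> sigma0_inv a b k i = j"
    then have "?L ! (k - 1 - i) = ?L ! p" "k - 1 - i < k"
      using p by (auto simp: sigma0_inv_def)
    then have "k - 1 - i = p"
      using nth_eq_iff_index_eq[OF L(2)] L(1) p(1) by auto
    with \<open>i < k \<and> sigma0_inv a b k i = j\<close> show "i = k - 1 - p" by auto
  qed
  then have "sigma0 a b k j = k - 1 - p"
    using \<open>j < k\<close> by (simp add: sigma0_def)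
  then show "a j \<le> b (sigma0 a b k j) + 1"
    using L(4) p by auto
qed

theorem mainTheorem4:
  fixes a b :: "nat \<Rightarrow> int" and k m :: nat and \<sigma> \<omega> :: "nat \<Rightarrow> nat"
  assumes "strongly_regular_biseq a b k"
    and "\<sigma> permutes {..<k}" and "\<omega> permutes {..<k}"
    and "bruhat_le k (sigma0 a b k) \<sigma>" and "bruhat_le k \<sigma> \<omega>"
    and "m \<ge> 1"
  shows "c_val (rm m \<sigma>) (rm m \<omega>) (rep m a) (rep m b) (m * k)
           = int (m ^ 2) * (int (perm_length k \<omega>) - int (perm_length k \<sigma>))"
proof -
  have bs: "biseq a b k"
    using assms(1) by (simp add: strongly_regular_biseq_def regular_biseq_def)
  note mono = strongly_regular_biseq_strict_mono[OF assms(1)]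
  have adm_\<sigma>: "\<forall>i<k. a i \<le> b (\<sigma> i) + 1"
    using bruhat_le_admissible[OF bs assms(4) sigma0_admissible[OF bs]] .
  have adm_\<omega>: "\<forall>i<k. a i \<le> b (\<omega> i) + 1"
    using bruhat_le_admissible[OF bs assms(5) adm_\<sigma>] .
  note nonempty_\<sigma> = strongly_regular_biseq_nonempty[OF assms(1,2) adm_\<sigma>]
  note nonempty_\<omega> = strongly_regular_biseq_nonempty[OF assms(1,3) adm_\<omega>]
  show ?thesis
    using orbit_dim_sum_plus_perm_length[OF mono nonempty_\<sigma> assms(2)]
      orbit_dim_sum_plus_perm_length[OF mono nonempty_\<omega> assms(3)]
    unfolding c_val_def orbit_dim_multiseg_rep[where x = \<sigma>, OF nonempty_\<sigma> assms(6)]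
      orbit_dim_multiseg_rep[where x = \<omega>, OF nonempty_\<omega> assms(6)]
    by (simp add: right_diff_distrib[symmetric])
qed

end
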